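(* Fix integers $2\le k\le n$, $M=\lceil n/k\rceil$, and let the shadow images $1,\ldots,n$ be split into $M$ groups, group $j$ consisting of images $(j-1)k+1,\ldots,\min(jk,n)$; write $|\mathcal{G}_M|=n-(M-1)k$ for the size of the last group. Let $\vec\lambda=(\lambda_1,\ldots,\lambda_M)$ be a valid partition of $t=\sum_i\lambda_i$, and write its multiset of components as $\{l_1^{d_1},\ldots,l_r^{d_r}\}$, where $l_1,\ldots,l_r$ are the distinct values among $\lambda_1,\ldots,\lambda_M$ and $d_g$ is the multiplicity of $l_g$. Let $\beta_{\vec\lambda}$ be the probability that a uniformly random $t$-element subset of the $n$ shadow images contains, from groups $1,\ldots,M$, numbers of images forming a rearrangement of $\vec\lambda$ (i.e., a vector $(\lambda_{\varphi(1)},\ldots,\lambda_{\varphi(M)})$ for some permutation $\varphi$). Then $$\beta_{\vec\lambda}=\frac{1}{\binom{n}{t}}\sum_{g=1}^{r}\left[\binom{|\mathcal{G}_M|}{l_g}\,\frac{\prod_{i=1}^{r}\binom{k}{l_i}^{d_i}}{\binom{k}{l_g}}\cdot\frac{(M-1)!}{d_1!\cdots d_{g-1}!\,(d_g-1)!\,d_{g+1}!\cdots d_r!}\right],$$ with the convention $\binom{a}{b}=0$ when $b>a$.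
   Context: A valid partition is a vector $\vec\lambda=(\lambda_1,\ldots,\lambda_M)$ of non-negative integers with $\max_j\lambda_j\le k$ and $\lambda_M\le n-(M-1)k$. *)

theory Defs
  imports Complex_Main "HOL-Combinatorics.Permutations"
begin

definition num_groups :: "nat \<Rightarrow> nat \<Rightarrow> nat" where
  "num_groups n k = nat \<lceil>real n / real k\<rceil>"

definition group :: "nat \<Rightarrow> nat \<Rightarrow> nat \<Rightarrow> nat set" where
  "group n k j = {(j - 1) * k + 1 .. min (j * k) n}"

(* Valid partition, given as a list lam = [lambda_1, ..., lambda_M] (lam ! (j-1) = lambda_j) *)
definition valid_partition :: "nat \<Rightarrow> nat \<Rightarrow> nat list \<Rightarrow> bool" where
  "valid_partition n k lam \<longleftrightarrow>
     (let M = num_groups n k in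
        length lam = M \<and> (\<forall>j\<in>{1..M}. lam ! (j - 1) \<le> k) \<and>
        lam ! (M - 1) \<le> n - (M - 1) * k)"

definition good_subsets :: "nat \<Rightarrow> nat \<Rightarrow> nat list \<Rightarrow> nat set set" where
  "good_subsets n k lam =
     {S. S \<subseteq> {1..n} \<and> card S = sum_list lam \<and>
         (\<exists>\<phi>. \<phi> permutes {1..num_groups n k} \<and>
              (\<forall>j\<in>{1..num_groups n k}. card (S \<inter> group n k j) = lam ! (\<phi> j - 1)))}"

definition beta :: "nat \<Rightarrow> nat \<Rightarrow> nat list \<Rightarrow> real" where
  "beta n k lam = real (card (good_subsets n k lam)) / real (n choose sum_list lam)"

end

theory Submission
  imports Defs "HOL-Combinatorics.Multiset_Permutations" "HOL-Library.FuncSet"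
begin

(* A subset S of the images is determined by the pieces S \<inter> G_j it cuts out of the groups, so
   the subsets with prescribed group counts c_1, ..., c_M number prod_j C(|G_j|, c_j).  The good
   subsets are those whose count vector is a permutation of the multiset of lam.  Summing over
   these permutations and grouping them by their last entry l_g = c_M gives the formula: the
   first M - 1 groups have size k and contribute prod_i C(k, l_i)^d_i / C(k, l_g), the last group
   contributes C(|G_M|, l_g), and (M-1)! / (d_1! ... (d_g - 1)! ... d_r!) permutations end in l_g. *)

lemma card_subsets_with_prescribed_intersections:
  fixes G :: "'i \<Rightarrow> 'a set"
  assumes "finite I" and fin: "\<And>i. i \<in> I \<Longrightarrow> finite (G i)" and disj: "disjoint_family_on G I"
  shows "card {S. S \<subseteq> (\<Union>i\<in>I. G i) \<and> (\<forall>i\<in>I. card (S \<inter> G i) = c i)} =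
         (\<Prod>i\<in>I. card (G i) choose c i)"
proof -
  let ?L = "{S. S \<subseteq> (\<Union>i\<in>I. G i) \<and> (\<forall>i\<in>I. card (S \<inter> G i) = c i)}"
  let ?R = "\<Pi>\<^sub>E i\<in>I. {B. B \<subseteq> G i \<and> card B = c i}"
  have UN_Int: "(\<Union>j\<in>I. B j) \<inter> G i = B i" if "B \<in> ?R" and "i \<in> I" for B i
  proof -
    have "B j \<inter> G i = {}" if "j \<in> I" "j \<noteq> i" for j
      using \<open>B \<in> ?R\<close> disj \<open>i \<in> I\<close> that by (fastforce simp: disjoint_family_on_def)
    moreover have "B i \<subseteq> G i" using that by auto
    ultimately show ?thesis using that by blast
  qed
  have "bij_betw (\<lambda>S. \<lambda>i\<in>I. S \<inter> G i) ?L ?R"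
  proof (rule bij_betw_byWitness[where f' = "\<lambda>B. \<Union>j\<in>I. B j"])
    show "\<forall>S\<in>?L. (\<Union>j\<in>I. (\<lambda>i\<in>I. S \<inter> G i) j) = S" by auto
    show "\<forall>B\<in>?R. (\<lambda>i\<in>I. (\<Union>j\<in>I. B j) \<inter> G i) = B"
      using UN_Int by (metis (no_types, lifting) PiE_iff extensional_restrict restrict_ext)
    show "(\<lambda>S. \<lambda>i\<in>I. S \<inter> G i) ` ?L \<subseteq> ?R" by auto
    show "(\<lambda>B. \<Union>j\<in>I. B j) ` ?R \<subseteq> ?L" using UN_Int by (fastforce simp: PiE_iff)
  qed
  then have "card ?L = card ?R" by (rule bij_betw_same_card)
  also have "\<dots> = (\<Prod>i\<in>I. card {B. B \<subseteq> G i \<and> card B = c i})" by (rule card_PiE) fact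
  also have "\<dots> = (\<Prod>i\<in>I. card (G i) choose c i)" using fin by (simp add: n_subsets)
  finally show ?thesis .
qed

lemma ex_permutes_iff_image_mset_eq:
  assumes "finite A"
  shows "(\<exists>p. p permutes A \<and> (\<forall>x\<in>A. f x = g (p x))) \<longleftrightarrow>
         image_mset f (mset_set A) = image_mset g (mset_set A)"
  using assms by (metis permutes_implies_image_mset_eq image_mset_eq_implies_permutes)

lemma mset_eq_image_mset_nth_pred:
  "mset xs = image_mset (\<lambda>j. xs ! (j - 1)) (mset_set {1..length xs})"
proof -
  have "xs = map (\<lambda>j. xs ! (j - 1)) [1..<Suc (length xs)]"
    by (rule nth_equalityI) (simp_all del: upt_Suc)
  then show ?thesis
    by (metis atLeastLessThanSuc_atLeastAtMost mset_map mset_upt)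
qed

lemma prod_list_map_conv_prod_nth: "(\<Prod>x\<leftarrow>xs. f x) = (\<Prod>i<length xs. f (xs ! i))"
  by (simp add: prod.list_conv_set_nth atLeast0LessThan)

lemma prod_list_butlast_mult_last:
  fixes f :: "'a \<Rightarrow> 'b::comm_monoid_mult"
  assumes "xs \<noteq> []"
  shows "(\<Prod>x\<leftarrow>butlast xs. f x) * f (last xs) = (\<Prod>y\<in>set xs. f y ^ count (mset xs) y)"
proof -
  have "(\<Prod>x\<leftarrow>butlast xs. f x) * f (last xs) = (\<Prod>x\<leftarrow>butlast xs @ [last xs]. f x)"
    by simp
  also have "\<dots> = (\<Prod>x\<leftarrow>xs. f x)"
    using assms by simp
  also have "\<dots> = prod_mset (image_mset f (mset xs))"
    by (simp add: prod_mset_prod_list flip: mset_map)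
  also have "\<dots> = (\<Prod>y\<in>set xs. f y ^ count (mset xs) y)"
    by (simp add: image_prod_mset_multiplicity)
  finally show ?thesis .
qed

lemma sum_permutations_of_multiset_last:
  assumes "A \<noteq> {#}"
  shows "(\<Sum>xs\<in>permutations_of_multiset A. h (last xs)) =
         (\<Sum>x\<in>set_mset A. of_nat (card (permutations_of_multiset (A - {#x#}))) * h x)"
proof -
  have "(\<Sum>xs\<in>permutations_of_multiset A. h (last xs)) =
        (\<Sum>xs\<in>rev ` permutations_of_multiset A. h (last xs))"
    by simp
  also have "\<dots> = (\<Sum>xs\<in>permutations_of_multiset A. h (hd xs))"
    by (subst sum.reindex) (auto simp: last_rev)
  also have "\<dots> = (\<Sum>x\<in>set_mset A. \<Sum>xs\<in>(#) x ` permutations_of_multiset (A - {#x#}). h (hd xs))"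
    using assms by (subst permutations_of_multiset_nonempty) (auto intro: sum.UNION_disjoint)
  also have "\<dots> = (\<Sum>x\<in>set_mset A. of_nat (card (permutations_of_multiset (A - {#x#}))) * h x)"
    by (simp add: sum.reindex)
  finally show ?thesis .
qed

lemma real_card_permutations_of_multiset_remove_fact:
  assumes "x \<in># A"
  shows "real (card (permutations_of_multiset (A - {#x#}))) =
         fact (size A - 1) / (\<Prod>y\<in>set_mset A. fact (if y = x then count A y - 1 else count A y))"
proof -
  let ?B = "A - {#x#}"
  have "(\<Prod>y\<in>set_mset ?B. fact (count ?B y) :: nat) = (\<Prod>y\<in>set_mset A. fact (count ?B y))"
    by (rule prod.mono_neutral_left) (auto simp: not_in_iff dest: in_diffD)
  also have "\<dots> = (\<Prod>y\<in>set_mset A. fact (if y = x then count A y - 1 else count A y))"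
    by (rule prod.cong) auto
  finally have "card (permutations_of_multiset ?B) *
      (\<Prod>y\<in>set_mset A. fact (if y = x then count A y - 1 else count A y)) = fact (size A - 1)"
    using card_permutations_of_multiset_aux[of ?B] assms by (simp add: size_Diff_submset)
  then have "real (card (permutations_of_multiset ?B)) *
      real (\<Prod>y\<in>set_mset A. fact (if y = x then count A y - 1 else count A y)) =
      real (fact (size A - 1))"
    by (metis of_nat_mult)
  then show ?thesis
    by (simp add: field_simps)
qed

lemma div_eq_iff_nat: "0 < (k::nat) \<Longrightarrow> a div k = i \<longleftrightarrow> i * k \<le> a \<and> a < Suc i * k"
  by (meson div_less_iff_less_mult le_less_Suc_eq less_eq_div_iff_mult_less_eq nat_le_linear)

lemma num_groups_real: "real (num_groups n k) = of_int \<lceil>real n / real k\<rceil>"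
  unfolding num_groups_def by simp

lemma num_groups_bounds:
  assumes "0 < k"
  shows "n \<le> num_groups n k * k" and "num_groups n k * k < n + k"
proof -
  have "real n / real k \<le> real (num_groups n k)" and "real (num_groups n k) < real n / real k + 1"
    unfolding num_groups_real by linarith+
  then have "real n \<le> real (num_groups n k * k)" and "real (num_groups n k * k) < real (n + k)"
    using assms by (simp_all add: field_simps)
  then show "n \<le> num_groups n k * k" and "num_groups n k * k < n + k"
    by linarith+
qed

lemma num_groups_pos:
  assumes "0 < k" and "0 < n"
  shows "0 < num_groups n k"
  using num_groups_bounds(1)[OF assms(1), of n] assms(2) by (cases "num_groups n k") simp_all

lemma mem_group_Suc_iff:
  assumes "0 < k"
  shows "x \<in> group n k (Suc i) \<longleftrightarrow> 0 < x \<and> x \<le> n \<and> (x - 1) div k = i"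
  using assms by (auto simp: group_def div_eq_iff_nat)

lemma finite_group [simp]: "finite (group n k j)"
  by (simp add: group_def)

lemma group_0 [simp]: "group n k 0 = {}"
  by (simp add: group_def)

lemma disjoint_family_group: "disjoint_family (group n k)"
proof (cases "k = 0")
  case True
  then show ?thesis by (simp add: group_def disjoint_family_on_def)
next
  case False
  show ?thesis unfolding disjoint_family_on_def
  proof (intro ballI impI)
    fix i j :: nat assume "i \<noteq> j"
    then show "group n k i \<inter> group n k j = {}"
      using False by (cases i; cases j) (auto simp: mem_group_Suc_iff)
  qed
qed

lemma UN_group_eq:
  assumes "0 < k"
  shows "(\<Union>j\<in>{1..num_groups n k}. group n k j) = {1..n}"
proof
  show "(\<Union>j\<in>{1..num_groups n k}. group n k j) \<subseteq> {1..n}" by (auto simp: group_def)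
  show "{1..n} \<subseteq> (\<Union>j\<in>{1..num_groups n k}. group n k j)"
  proof
    fix x assume x: "x \<in> {1..n}"
    have "(x - 1) div k < num_groups n k"
      using x num_groups_bounds(1)[OF assms, of n] by (intro less_mult_imp_div_less) auto
    moreover have "x \<in> group n k (Suc ((x - 1) div k))"
      using x assms by (simp add: mem_group_Suc_iff)
    ultimately show "x \<in> (\<Union>j\<in>{1..num_groups n k}. group n k j)" by force
  qed
qed

lemma card_group:
  assumes "1 \<le> j" and "j < num_groups n k"
  shows "card (group n k j) = k"
proof -
  have "0 < k" using assms by (cases "k = 0") (simp_all add: num_groups_def)
  have "Suc j * k \<le> num_groups n k * k"
    using assms(2) by (intro mult_le_mono1) simp
  with num_groups_bounds(2)[OF \<open>0 < k\<close>] have "j * k < n"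
    by (metis add_less_cancel_right le_less_trans mult_Suc add.commute)
  then have "min (j * k) n = j * k" by simp
  moreover have "j * k = (j - 1) * k + k" using assms(1) by (cases j) auto
  ultimately show ?thesis by (simp add: group_def)
qed

lemma card_last_group:
  assumes "0 < k"
  shows "card (group n k (num_groups n k)) = n - (num_groups n k - 1) * k"
  using num_groups_bounds(1)[OF assms, of n] by (simp add: group_def min_absorb2)

lemma valid_partition_length: "valid_partition n k lam \<Longrightarrow> length lam = num_groups n k"
  by (simp add: valid_partition_def Let_def)

lemma valid_partition_le:
  assumes "valid_partition n k lam" and "x \<in> set lam"
  shows "x \<le> k"
proof -
  from assms(2) obtain i where "i < length lam" and "lam ! i = x"
    unfolding in_set_conv_nth by blast
  with assms(1) show ?thesis
    by (auto simp: valid_partition_def Let_def dest: bspec[of _ _ "Suc i"])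
qed

definition group_counts :: "nat \<Rightarrow> nat \<Rightarrow> nat set \<Rightarrow> nat list" where
  "group_counts n k S = map (\<lambda>j. card (S \<inter> group n k j)) [1..<Suc (num_groups n k)]"

lemma mset_group_counts:
  "mset (group_counts n k S) =
   image_mset (\<lambda>j. card (S \<inter> group n k j)) (mset_set {1..num_groups n k})"
  by (simp add: group_counts_def atLeastLessThanSuc_atLeastAtMost del: upt_Suc)

lemma sum_list_group_counts:
  assumes "0 < k" and "S \<subseteq> {1..n}"
  shows "sum_list (group_counts n k S) = card S"
proof -
  have "sum_list (group_counts n k S) = (\<Sum>j\<in>{1..num_groups n k}. card (S \<inter> group n k j))"
    by (simp add: group_counts_def interv_sum_list_conv_sum_set_nat atLeastLessThanSuc_atLeastAtMost
        del: upt_Suc)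
  also have "\<dots> = card (\<Union>j\<in>{1..num_groups n k}. S \<inter> group n k j)"
    using disjoint_family_group[of n k]
    by (intro card_UN_disjoint[symmetric]) (auto dest: disjoint_family_onD)
  also have "(\<Union>j\<in>{1..num_groups n k}. S \<inter> group n k j) = S"
    using assms UN_group_eq[of k n] by blast
  finally show ?thesis .
qed

lemma good_subsets_eq:
  assumes "0 < k" and len: "length lam = num_groups n k"
  shows "good_subsets n k lam = {S. S \<subseteq> {1..n} \<and> mset (group_counts n k S) = mset lam}"
proof -
  have "(\<exists>\<phi>. \<phi> permutes {1..num_groups n k} \<and>
           (\<forall>j\<in>{1..num_groups n k}. card (S \<inter> group n k j) = lam ! (\<phi> j - 1))) \<longleftrightarrow>
        mset (group_counts n k S) = mset lam" for S
    unfolding mset_group_counts mset_eq_image_mset_nth_pred[of lam] len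
    by (rule ex_permutes_iff_image_mset_eq) simp
  moreover have "card S = sum_list lam"
    if "S \<subseteq> {1..n}" and "mset (group_counts n k S) = mset lam" for S
    using that sum_list_group_counts[OF assms(1)] by (metis sum_mset_sum_list)
  ultimately show ?thesis
    unfolding good_subsets_def by blast
qed

lemma card_subsets_with_group_counts:
  assumes "0 < k" and "0 < n" and len: "length xs = num_groups n k"
  shows "card {S. S \<subseteq> {1..n} \<and> group_counts n k S = xs} =
         (\<Prod>x\<leftarrow>butlast xs. k choose x) * (n - (num_groups n k - 1) * k choose last xs)"
proof -
  define M where "M = num_groups n k"
  have "0 < M" using num_groups_pos[OF assms(1,2)] by (simp add: M_def)
  have counts_iff: "group_counts n k S = xs \<longleftrightarrow> (\<forall>j\<in>{1..M}. card (S \<inter> group n k j) = xs ! (j - 1))"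
    for S
  proof -
    have "group_counts n k S = xs \<longleftrightarrow> (\<forall>i<M. card (S \<inter> group n k (Suc i)) = xs ! i)"
      by (simp add: list_eq_iff_nth_eq len M_def group_counts_def del: upt_Suc)
    also have "\<dots> \<longleftrightarrow> (\<forall>j\<in>{1..M}. card (S \<inter> group n k j) = xs ! (j - 1))"
      unfolding image_Suc_lessThan[symmetric] by auto
    finally show ?thesis .
  qed
  have "card {S. S \<subseteq> {1..n} \<and> group_counts n k S = xs} =
        (\<Prod>j\<in>{1..M}. card (group n k j) choose xs ! (j - 1))"
    unfolding counts_iff UN_group_eq[OF assms(1), of n, symmetric, folded M_def]
    using disjoint_family_group
    by (intro card_subsets_with_prescribed_intersections) (auto intro: disjoint_family_on_mono)
  also have "\<dots> = (\<Prod>i<M. card (group n k (Suc i)) choose xs ! i)"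
    by (simp add: prod.atLeast1_atMost_eq)
  also have "\<dots> = (\<Prod>i<M - 1. card (group n k (Suc i)) choose xs ! i) *
                  (card (group n k M) choose xs ! (M - 1))"
    using \<open>0 < M\<close> by (cases M) simp_all
  also have "\<dots> = (\<Prod>i<M - 1. k choose butlast xs ! i) * (n - (M - 1) * k choose last xs)"
  proof -
    have "(\<Prod>i<M - 1. card (group n k (Suc i)) choose xs ! i) = (\<Prod>i<M - 1. k choose butlast xs ! i)"
      using len by (intro prod.cong) (simp_all add: card_group nth_butlast M_def)
    moreover have "xs ! (M - 1) = last xs"
      using \<open>0 < M\<close> len by (subst last_conv_nth) (auto simp: M_def)
    ultimately show ?thesis using card_last_group[OF assms(1)] by (simp add: M_def)
  qed
  also have "\<dots> = (\<Prod>x\<leftarrow>butlast xs. k choose x) * (n - (M - 1) * k choose last xs)"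
    by (simp add: prod_list_map_conv_prod_nth len M_def)
  finally show ?thesis unfolding M_def .
qed

lemma card_good_subsets:
  assumes "0 < k" and "0 < n" and len: "length lam = num_groups n k"
  shows "card (good_subsets n k lam) =
         (\<Sum>xs\<in>permutations_of_multiset (mset lam).
            (\<Prod>x\<leftarrow>butlast xs. k choose x) * (n - (num_groups n k - 1) * k choose last xs))"
proof -
  let ?fiber = "\<lambda>xs. {S. S \<subseteq> {1..n} \<and> group_counts n k S = xs}"
  have "good_subsets n k lam = (\<Union>xs\<in>permutations_of_multiset (mset lam). ?fiber xs)"
    unfolding good_subsets_eq[OF assms(1) len] by (auto simp: permutations_of_multiset_def)
  then have "card (good_subsets n k lam) = (\<Sum>xs\<in>permutations_of_multiset (mset lam). card (?fiber xs))"
    by (simp only:) (rule card_UN_disjoint; auto intro: finite_subset[of _ "Pow {1..n}"])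
  also have "\<dots> = (\<Sum>xs\<in>permutations_of_multiset (mset lam).
      (\<Prod>x\<leftarrow>butlast xs. k choose x) * (n - (num_groups n k - 1) * k choose last xs))"
    using len by (intro sum.cong refl card_subsets_with_group_counts[OF assms(1,2)])
      (metis mset_eq_length permutations_of_multisetD)
  finally show ?thesis .
qed

lemma real_card_good_subsets:
  assumes "0 < k" and "0 < n" and valid: "valid_partition n k lam"
  shows "real (card (good_subsets n k lam)) =
         (\<Sum>xs\<in>permutations_of_multiset (mset lam).
            real (n - (num_groups n k - 1) * k choose last xs) *
            ((\<Prod>l\<in>set lam. real (k choose l) ^ count (mset lam) l) / real (k choose last xs)))"
  unfolding card_good_subsets[OF assms(1,2) valid_partition_length[OF valid]] of_nat_sum
proof (intro sum.cong refl)
  fix xs assume "xs \<in> permutations_of_multiset (mset lam)"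
  then have mset_xs: "mset xs = mset lam" by (rule permutations_of_multisetD)
  then have set_xs: "set xs = set lam" by (metis set_mset_mset)
  have "lam \<noteq> []"
    using num_groups_pos[OF assms(1,2)] valid_partition_length[OF valid] by auto
  then have "xs \<noteq> []" using set_xs by auto
  then have "(\<Prod>x\<leftarrow>butlast xs. k choose x) * (k choose last xs) =
      (\<Prod>l\<in>set lam. (k choose l) ^ count (mset lam) l)"
    using prod_list_butlast_mult_last[of xs "(choose) k"] by (simp add: set_xs mset_xs)
  moreover have "k choose last xs \<noteq> 0"
    using valid_partition_le[OF valid, of "last xs"] last_in_set[OF \<open>xs \<noteq> []\<close>] set_xs by simp
  ultimately have "real (\<Prod>x\<leftarrow>butlast xs. k choose x) =
      (\<Prod>l\<in>set lam. real (k choose l) ^ count (mset lam) l) / real (k choose last xs)"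
    by (simp add: field_simps flip: of_nat_mult of_nat_prod of_nat_power)
  then show "real ((\<Prod>x\<leftarrow>butlast xs. k choose x) * (n - (num_groups n k - 1) * k choose last xs)) =
      real (n - (num_groups n k - 1) * k choose last xs) *
      ((\<Prod>l\<in>set lam. real (k choose l) ^ count (mset lam) l) / real (k choose last xs))"
    by simp
qed

theorem lemma5:
  fixes n k :: nat and lam :: "nat list"
  assumes "2 \<le> k" and "k \<le> n"
    and "valid_partition n k lam"
  defines "M \<equiv> num_groups n k"
    and "t \<equiv> sum_list lam"
    and "GM \<equiv> n - (num_groups n k - 1) * k"
    and "d \<equiv> (\<lambda>l. count (mset lam) l)"
  shows "beta n k lam =
    (1 / real (n choose t)) *
    (\<Sum>lg\<in>set lam.
       real (GM choose lg) *
       ((\<Prod>li\<in>set lam. real (k choose li) ^ d li) / real (k choose lg)) *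
       (fact (M - 1) / (\<Prod>li\<in>set lam. fact (if li = lg then d li - 1 else d li))))"
proof -
  have "0 < k" and "0 < n" using assms(1,2) by simp_all
  have len: "length lam = M"
    using valid_partition_length[OF assms(3)] by (simp add: M_def)
  have "lam \<noteq> []" using num_groups_pos[OF \<open>0 < k\<close> \<open>0 < n\<close>] len by (auto simp: M_def)
  define h where "h x = real (GM choose x) * ((\<Prod>li\<in>set lam. real (k choose li) ^ d li) / real (k choose x))"
    for x
  have "real (card (good_subsets n k lam)) = (\<Sum>xs\<in>permutations_of_multiset (mset lam). h (last xs))"
    using real_card_good_subsets[OF \<open>0 < k\<close> \<open>0 < n\<close> assms(3)] by (simp add: h_def GM_def d_def)
  also have "\<dots> = (\<Sum>x\<in>set lam. real (card (permutations_of_multiset (mset lam - {#x#}))) * h x)"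
    using sum_permutations_of_multiset_last[of "mset lam" h] \<open>lam \<noteq> []\<close> by simp
  also have "\<dots> = (\<Sum>lg\<in>set lam.
       real (GM choose lg) *
       ((\<Prod>li\<in>set lam. real (k choose li) ^ d li) / real (k choose lg)) *
       (fact (M - 1) / (\<Prod>li\<in>set lam. fact (if li = lg then d li - 1 else d li))))"
    unfolding h_def d_def
    by (intro sum.cong refl) (simp add: real_card_permutations_of_multiset_remove_fact len mult_ac)
  finally show ?thesis by (simp add: beta_def t_def)
qed

end
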